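(* Let $(X_j,Y_j,S_j)$, $j\in\mathbb{Z}$, be a FAIM process. Then for every $n\ge1$, \[\hat K_{n+1}\le\begin{cases}\psi(0)\,\hat K_n^2 & \text{if } B_{n+1}=0,\\ 2\hat K_n & \text{if } B_{n+1}=1,\end{cases}\] where $\psi(0)=\max_{a\in\mathcal{S}}1/\pi_0(a)$ and $\pi_0$ is the stationary distribution of the state chain.
   Context: FAIM process: $(X_j,Y_j,S_j)$, $j\in\mathbb{Z}$, is strictly stationary, $X_j\in\{0,1\}$, $Y_j$ takes values in a finite alphabet, $S_j$ in a finite set $\mathcal{S}$; the conditional law $P_{X_j,Y_j,S_j|S_{j-1}}$ does not depend on $j$; and conditioned on $S_{j-1}$, $\{X_k,Y_k,S_k\}_{k\ge j}$ is independent of $\{X_l,Y_l,S_{l-1}\}_{l<j}$. The state sequence $(S_j)$ is a homogeneous, finite-state, stationary, aperiodic and irreducible Markov chain. For binary $U$ and finite-valued $Q$, $K(U|Q)=\sum_q|P_{U,Q}(0,q)-P_{U,Q}(1,q)|$; conditioning on several variables means treating the tuple as the observation. Polarization setup: for $n\ge1$, $N=2^n$, $G_N=B_NG_2^{\otimes n}$ with $G_2=\begin{bmatrix}1&0\\1&1\end{bmatrix}$ and $B_N$ the bit-reversal permutation matrix (arithmetic modulo 2); $U_1^N=X_1^NG_N$, $Q_i=(U_1^{i-1},Y_1^N)$. Let $B_1,B_2,\dots$ be i.i.d. Bernoulli$(1/2)$ and, for each $n$, $i-1=\sum_{j=1}^nB_j2^{n-j}$. The boundary-state-informed total variation process is $\hat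 K_n=K(U_i|Q_i,S_N,S_0)$ (with $N=2^n$); $\hat K_{n+1}$ is defined in the same way with $n+1$ in place of $n$ and the same $B_1,B_2,\dots$. *)

theory Defs
  imports Complex_Main
begin

text \<open>A FAIM process is determined (on every finite window) by its time-invariant
  kernel W a (x,y,s) = P(X_j=x, Y_j=y, S_j=s | S_{j-1}=a) and the stationary law pi
  of S_0.\<close>

definition state_trans :: "('s \<Rightarrow> bool \<times> 'y \<times> 's \<Rightarrow> real) \<Rightarrow> 's \<Rightarrow> 's \<Rightarrow> real" where
  "state_trans W a b = (\<Sum>xy\<in>(UNIV :: (bool \<times> 'y) set). W a (fst xy, snd xy, b))"

fun trans_pow :: "('s \<Rightarrow> 's \<Rightarrow> real) \<Rightarrow> nat \<Rightarrow> 's \<Rightarrow> 's \<Rightarrow> real" where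
  "trans_pow P 0 a b = (if a = b then 1 else 0)"
| "trans_pow P (Suc m) a b = (\<Sum>c\<in>UNIV. trans_pow P m a c * P c b)"

definition irreducible_chain :: "('s \<Rightarrow> 's \<Rightarrow> real) \<Rightarrow> bool" where
  "irreducible_chain P \<longleftrightarrow> (\<forall>a b. \<exists>m>0. trans_pow P m a b > 0)"

definition aperiodic_chain :: "('s \<Rightarrow> 's \<Rightarrow> real) \<Rightarrow> bool" where
  "aperiodic_chain P \<longleftrightarrow> (\<forall>a. Gcd {m. m > 0 \<and> trans_pow P m a a > 0} = 1)"

definition is_faim :: "('s::finite \<Rightarrow> bool \<times> 'y::finite \<times> 's \<Rightarrow> real) \<Rightarrow> ('s \<Rightarrow> real) \<Rightarrow> bool" where
  "is_faim W \<pi> \<longleftrightarrow>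
     (\<forall>a t. W a t \<ge> 0) \<and> (\<forall>a. (\<Sum>t\<in>UNIV. W a t) = 1) \<and>
     (\<forall>a. \<pi> a \<ge> 0) \<and> (\<Sum>a\<in>UNIV. \<pi> a) = 1 \<and>
     (\<forall>b. (\<Sum>a\<in>UNIV. \<pi> a * state_trans W a b) = \<pi> b) \<and>
     irreducible_chain (state_trans W) \<and> aperiodic_chain (state_trans W)"

text \<open>Joint probability of S_0^N = ss, X_1^N = xs, Y_1^N = ys (0-indexed lists).\<close>
definition faim_prob :: "('s \<Rightarrow> bool \<times> 'y \<times> 's \<Rightarrow> real) \<Rightarrow> ('s \<Rightarrow> real) \<Rightarrow>
    bool list \<Rightarrow> 'y list \<Rightarrow> 's list \<Rightarrow> real" where
  "faim_prob W \<pi> xs ys ss = \<pi> (ss ! 0) * (\<Prod>j<length xs. W (ss ! j) (xs ! j, ys ! j, ss ! Suc j))"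

section \<open>Polar transform G_N = B_N G_2^{\<otimes>n} over GF(2) (0-indexed entries)\<close>

definition G2 :: "nat \<Rightarrow> nat \<Rightarrow> nat" where
  "G2 a b = (if (a = 0 \<and> b = 0) \<or> (a = 1 \<and> b = 0) \<or> (a = 1 \<and> b = 1) then 1 else 0)"

text \<open>Kronecker power: (A \<otimes> B)(k,l) = A(k div m, l div m) * B(k mod m, l mod m).\<close>
fun kron_pow :: "nat \<Rightarrow> nat \<Rightarrow> nat \<Rightarrow> nat" where
  "kron_pow 0 k l = (if k = 0 \<and> l = 0 then 1 else 0)"
| "kron_pow (Suc n) k l = G2 (k div 2^n) (l div 2^n) * kron_pow n (k mod 2^n) (l mod 2^n)"

definition bitrev :: "nat \<Rightarrow> nat \<Rightarrow> nat" where
  "bitrev n k = (\<Sum>t<n. if odd (k div 2^t) then 2^(n - 1 - t) else 0)"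

definition bitrev_mat :: "nat \<Rightarrow> nat \<Rightarrow> nat \<Rightarrow> nat" where
  "bitrev_mat n k m = (if m = bitrev n k then 1 else 0)"

definition polar_mat :: "nat \<Rightarrow> nat \<Rightarrow> nat \<Rightarrow> nat" where
  "polar_mat n k l = (\<Sum>m<2^n. bitrev_mat n k m * kron_pow n m l) mod 2"

text \<open>U_1^N = X_1^N G_N (row vector times matrix, mod 2); True encodes the bit 1.\<close>
definition polar :: "nat \<Rightarrow> bool list \<Rightarrow> bool list" where
  "polar n xs = map (\<lambda>l. (\<Sum>k<2^n. (if xs ! k then 1 else 0) * polar_mat n k l) mod 2 = 1) [0..<2^n]"

text \<open>P(U_i = u, U_1^{i-1} = pre, Y_1^N = ys, S_0 = a, S_N = b), N = 2^n.\<close>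
definition joint_UQ :: "('s::finite \<Rightarrow> bool \<times> 'y::finite \<times> 's \<Rightarrow> real) \<Rightarrow> ('s \<Rightarrow> real) \<Rightarrow>
    nat \<Rightarrow> nat \<Rightarrow> bool \<Rightarrow> bool list \<Rightarrow> 'y list \<Rightarrow> 's \<Rightarrow> 's \<Rightarrow> real" where
  "joint_UQ W \<pi> n i u pre ys a b =
     (\<Sum>xs\<in>{xs :: bool list. length xs = 2^n}.
       \<Sum>ss\<in>{ss :: 's list. length ss = 2^n + 1 \<and> ss ! 0 = a \<and> ss ! (2^n) = b}.
         if take i (polar n xs) = pre @ [u] then faim_prob W \<pi> xs ys ss else 0)"

text \<open>K(U_i | U_1^{i-1}, Y_1^N, S_N, S_0); bit 0 is False, bit 1 is True.\<close>
definition Khat :: "('s::finite \<Rightarrow> bool \<times> 'y::finite \<times> 's \<Rightarrow> real) \<Rightarrow> ('s \<Rightarrow> real) \<Rightarrow>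
    nat \<Rightarrow> nat \<Rightarrow> real" where
  "Khat W \<pi> n i =
     (\<Sum>pre\<in>{pre :: bool list. length pre = i - 1}.
       \<Sum>ys\<in>{ys :: 'y list. length ys = 2^n}.
         \<Sum>a\<in>UNIV. \<Sum>b\<in>UNIV.
           \<bar>joint_UQ W \<pi> n i False pre ys a b - joint_UQ W \<pi> n i True pre ys a b\<bar>)"

definition polar_index :: "(nat \<Rightarrow> bool) \<Rightarrow> nat \<Rightarrow> nat" where
  "polar_index B n = 1 + (\<Sum>j\<in>{1..n}. (if B j then 1 else 0) * 2^(n - j))"

definition psi0 :: "('s::finite \<Rightarrow> real) \<Rightarrow> real" where
  "psi0 \<pi> = Max ((\<lambda>a. 1 / \<pi> a) ` UNIV)"

end

(* Write the block X_1^{2N} as two halves of length N. The polar transform of length 2N is the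
   butterfly (v xor w, w) of the two length-N transforms, and given the junction state S_N = m the
   halves are independent, so each joint probability at level n+1 is a sum over m of products of
   level-n joint probabilities divided by pi(m). For B_{n+1} = 0 the resulting difference is a
   product of two level-n differences; bounding 1/pi(m) by psi(0) and summing out m gives
   psi(0) K_n^2. For B_{n+1} = 1 it is a cross difference a_g d_0 - a_{not g} d_1, bounded by
   masses times differences; the masses marginalise to pi(m) and cancel the weight, giving 2 K_n. *)

theory Submission
  imports Defs
begin

lemma sum_lessThan_add:
  fixes f :: "nat \<Rightarrow> 'b::comm_monoid_add"
  shows "(\<Sum>k<a + b. f k) = (\<Sum>k<a. f k) + (\<Sum>k<b. f (a + k))"
  by (induction b) (simp_all add: add_ac)

lemma sum_chain_product:
  fixes f g :: "'p \<Rightarrow> 'q \<Rightarrow> 's \<Rightarrow> 's \<Rightarrow> 'a::comm_semiring_0"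
  shows "(\<Sum>p1\<in>A. \<Sum>p2\<in>A. \<Sum>y1\<in>Y. \<Sum>y2\<in>Y. \<Sum>a\<in>S. \<Sum>b\<in>S. \<Sum>m\<in>S. f p1 y1 a m * g p2 y2 m b) =
    (\<Sum>m\<in>S. (\<Sum>p\<in>A. \<Sum>y\<in>Y. \<Sum>a\<in>S. f p y a m) * (\<Sum>p\<in>A. \<Sum>y\<in>Y. \<Sum>b\<in>S. g p y m b))"
  apply (simp only: sum_product sum.swap[where A = S and B = A] sum.swap[where A = S and B = Y])
  apply (rule sum.cong[OF refl], rule sum.cong[OF refl], rule sum.cong[OF refl], rule sum.cong[OF refl])
  apply (rule trans[OF _ sum.swap], rule sum.cong[OF refl], rule sum.swap)
  done

lemma sum_push_innermost:
  "(\<Sum>m\<in>M. \<Sum>p\<in>A. \<Sum>y\<in>Y. \<Sum>a\<in>B. f m p y a) = (\<Sum>p\<in>A. \<Sum>y\<in>Y. \<Sum>a\<in>B. \<Sum>m\<in>M. f m p y a)"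
  by (subst sum.swap, rule sum.cong[OF refl], subst sum.swap, rule sum.cong[OF refl], rule sum.swap)

lemma sum_push_third:
  "(\<Sum>m\<in>M. \<Sum>p\<in>A. \<Sum>y\<in>Y. \<Sum>b\<in>B. f m p y b) = (\<Sum>p\<in>A. \<Sum>y\<in>Y. \<Sum>m\<in>M. \<Sum>b\<in>B. f m p y b)"
  by (subst sum.swap, rule sum.cong[OF refl], rule sum.swap)

lemma sum_pull_outermost:
  "(\<Sum>a\<in>A. \<Sum>b\<in>B. \<Sum>c\<in>C. f a b c) = (\<Sum>c\<in>C. \<Sum>a\<in>A. \<Sum>b\<in>B. f a b c)"
  by (rule trans[OF sum.cong[OF refl sum.swap] sum.swap])

abbreviation lists_of_len :: "nat \<Rightarrow> 'a list set" where
  "lists_of_len k \<equiv> {xs. length xs = k}"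

lemma finite_lists_of_len [simp]: "finite (lists_of_len k :: 'a::finite list set)"
  using finite_lists_length_eq[OF finite_UNIV, of k] by simp

lemma sum_lists_of_len_Suc:
  fixes f :: "'a::finite list \<Rightarrow> 'b::comm_monoid_add"
  shows "(\<Sum>xs\<in>lists_of_len (Suc k). f xs) = (\<Sum>x\<in>UNIV. \<Sum>xs\<in>lists_of_len k. f (x # xs))"
proof -
  have "bij_betw (\<lambda>(x, xs). x # xs) (UNIV \<times> lists_of_len k) (lists_of_len (Suc k) :: 'a list set)"
    by (auto simp: bij_betw_def inj_on_def length_Suc_conv image_iff)
  from sum.reindex_bij_betw[OF this, of f] show ?thesis
    by (simp add: sum.cartesian_product split_beta)
qed

lemma sum_lists_of_len_add:
  fixes f :: "'a::finite list \<Rightarrow> 'b::comm_monoid_add"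
  shows "(\<Sum>xs\<in>lists_of_len (k1 + k2). f xs) =
    (\<Sum>xs1\<in>lists_of_len k1. \<Sum>xs2\<in>lists_of_len k2. f (xs1 @ xs2))"
proof -
  have "bij_betw (\<lambda>(xs1, xs2). xs1 @ xs2) (lists_of_len k1 \<times> lists_of_len k2)
      (lists_of_len (k1 + k2) :: 'a list set)"
  proof (rule bij_betw_imageI)
    show "inj_on (\<lambda>(xs1, xs2). xs1 @ xs2) (lists_of_len k1 \<times> (lists_of_len k2 :: 'a list set))"
      by (auto simp: inj_on_def)
    have "xs \<in> (\<lambda>(xs1, xs2). xs1 @ xs2) ` (lists_of_len k1 \<times> lists_of_len k2)"
      if "length xs = k1 + k2" for xs :: "'a list"
      using that by (intro image_eqI[of _ _ "(take k1 xs, drop k1 xs)"]) auto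
    then show "(\<lambda>(xs1, xs2). xs1 @ xs2) ` (lists_of_len k1 \<times> lists_of_len k2) =
        (lists_of_len (k1 + k2) :: 'a list set)"
      by auto
  qed
  from sum.reindex_bij_betw[OF this, of f] show ?thesis
    by (simp add: sum.cartesian_product split_beta)
qed

lemma sum_lists_of_len_snoc:
  fixes f :: "'a::finite list \<Rightarrow> 'b::comm_monoid_add"
  shows "(\<Sum>xs\<in>lists_of_len (Suc k). f xs) = (\<Sum>xs\<in>lists_of_len k. \<Sum>x\<in>UNIV. f (xs @ [x]))"
  using sum_lists_of_len_add[of f k 1] by (simp add: sum_lists_of_len_Suc)

section \<open>Recursive structure of the polar transform\<close>

text \<open>G_{2N} maps the transforms v, w of the two halves of its input to the interleaving of
  v xor w with w (polar_append below).\<close>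
fun butterfly :: "bool list \<Rightarrow> bool list \<Rightarrow> bool list" where
  "butterfly (v # vs) (w # ws) = (v \<noteq> w) # w # butterfly vs ws"
| "butterfly _ _ = []"

lemma length_butterfly [simp]: "length (butterfly vs ws) = 2 * min (length vs) (length ws)"
  by (induction vs ws rule: butterfly.induct) auto

lemma butterfly_eq_iff:
  "length vs = length ws \<Longrightarrow> length vs' = length ws' \<Longrightarrow> length vs = length vs' \<Longrightarrow>
    butterfly vs ws = butterfly vs' ws' \<longleftrightarrow> vs = vs' \<and> ws = ws'"
proof (induction vs ws arbitrary: vs' ws' rule: butterfly.induct)
  case (1 v vs w ws)
  then show ?case by (cases vs'; cases ws') auto
qed auto

lemma nth_butterfly:
  "l < length (butterfly vs ws) \<Longrightarrow>
    butterfly vs ws ! l = (if even l then vs ! (l div 2) \<noteq> ws ! (l div 2) else ws ! (l div 2))"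
proof (induction vs ws arbitrary: l rule: butterfly.induct)
  case (1 v vs w ws)
  show ?case
  proof (cases l)
    case (Suc l')
    with 1 show ?thesis by (cases l') auto
  qed simp
qed auto

lemma take_butterfly_double: "take (2 * k) (butterfly vs ws) = butterfly (take k vs) (take k ws)"
proof (induction k arbitrary: vs ws)
  case (Suc k)
  then show ?case by (cases vs; cases ws) auto
qed simp

lemma butterfly_snoc:
  "length vs = length ws \<Longrightarrow> butterfly (vs @ [v]) (ws @ [w]) = butterfly vs ws @ [v \<noteq> w, w]"
  by (induction vs ws rule: butterfly.induct) auto

lemma sum_lists_of_len_butterfly:
  fixes f :: "bool list \<Rightarrow> 'b::comm_monoid_add"
  shows "(\<Sum>xs\<in>lists_of_len (2 * k). f xs) =
    (\<Sum>vs\<in>lists_of_len k. \<Sum>ws\<in>lists_of_len k. f (butterfly vs ws))"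
proof (induction k arbitrary: f)
  case (Suc k)
  have "(\<Sum>xs\<in>lists_of_len (2 * Suc k). f xs) =
      (\<Sum>x\<in>UNIV. \<Sum>y\<in>UNIV. \<Sum>vs\<in>lists_of_len k. \<Sum>ws\<in>lists_of_len k. f (x # y # butterfly vs ws))"
    using Suc by (simp add: sum_lists_of_len_Suc)
  also have "\<dots> = (\<Sum>v\<in>UNIV. \<Sum>w\<in>UNIV. \<Sum>vs\<in>lists_of_len k. \<Sum>ws\<in>lists_of_len k.
      f ((v \<noteq> w) # w # butterfly vs ws))"
    by (simp add: UNIV_bool add_ac)
  also have "\<dots> = (\<Sum>vs\<in>lists_of_len (Suc k). \<Sum>ws\<in>lists_of_len (Suc k). f (butterfly vs ws))"
    by (simp add: sum_lists_of_len_Suc sum.swap[of _ UNIV "lists_of_len k"])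
  finally show ?case .
qed simp

lemma take_butterfly_Suc_double_eq_iff:
  assumes "k < length vs" "k < length ws" "length p = k" "length q = k"
  shows "take (Suc (2 * k)) (butterfly vs ws) = butterfly p q @ [u] \<longleftrightarrow>
    (\<exists>e. take (Suc k) vs = p @ [e] \<and> take (Suc k) ws = q @ [e \<noteq> u])"
proof -
  have "take (Suc (2 * k)) (butterfly vs ws) = butterfly (take k vs) (take k ws) @ [vs ! k \<noteq> ws ! k]"
    using assms by (simp add: take_Suc_conv_app_nth take_butterfly_double nth_butterfly)
  then show ?thesis
    using assms by (auto simp: take_Suc_conv_app_nth butterfly_eq_iff)
qed

lemma take_double_Suc_butterfly_eq_iff:
  assumes "k < length vs" "k < length ws" "length p = k" "length q = k"
  shows "take (2 * Suc k) (butterfly vs ws) = butterfly p q @ [g, u] \<longleftrightarrow>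
    take (Suc k) vs = p @ [g \<noteq> u] \<and> take (Suc k) ws = q @ [u]"
proof -
  have "take (2 * Suc k) (butterfly vs ws) = butterfly (take k vs) (take k ws) @ [vs ! k \<noteq> ws ! k, ws ! k]"
    using assms by (simp only: take_butterfly_double take_Suc_conv_app_nth) (simp add: butterfly_snoc)
  then show ?thesis
    using assms by (auto simp: take_Suc_conv_app_nth butterfly_eq_iff)
qed

lemma kron_pow_le_1: "kron_pow n k l \<le> 1"
  by (induction n arbitrary: k l) (auto simp: G2_def)

lemma kron_pow_Suc_low:
  "kron_pow (Suc n) k l = kron_pow n (k div 2) (l div 2) * G2 (k mod 2) (l mod 2)"
proof (induction n arbitrary: k l)
  case 0
  then show ?case by (auto simp: G2_def)
next
  case (Suc n)
  have "k div 2 ^ Suc n = k div 2 div 2 ^ n" for k :: nat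
    by (simp add: div_mult2_eq)
  moreover have "k mod 2 ^ Suc n div 2 = k div 2 mod 2 ^ n" for k :: nat
    by (simp only: power_Suc mod_mult2_eq)
  moreover have "k mod 2 ^ Suc n mod 2 = k mod 2" for k :: nat
    by (simp add: mod_mod_cancel)
  ultimately show ?case
    using Suc[of "k mod 2 ^ Suc n" "l mod 2 ^ Suc n"] by (simp only: kron_pow.simps)
qed

lemma bitrev_Suc: "bitrev (Suc n) k = 2 * bitrev n (k mod 2 ^ n) + k div 2 ^ n mod 2"
proof -
  have "(\<Sum>t<n. if odd (k div 2 ^ t) then 2 ^ (Suc n - 1 - t) else 0) = 2 * bitrev n (k mod 2 ^ n)"
    unfolding bitrev_def sum_distrib_left
  proof (rule sum.cong[OF refl])
    fix t assume "t \<in> {..<n}"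
    then have "t < n" by simp
    then have "odd (k mod 2 ^ n div 2 ^ t) = odd (k div 2 ^ t)"
      by (simp add: bit_iff_odd[symmetric] take_bit_eq_mod[symmetric] bit_take_bit_iff)
    moreover have "(2::nat) ^ (Suc n - 1 - t) = 2 * 2 ^ (n - 1 - t)"
      using \<open>t < n\<close> by (simp flip: power_Suc add: Suc_diff_Suc)
    ultimately show "(if odd (k div 2 ^ t) then 2 ^ (Suc n - 1 - t) else 0) =
        (2::nat) * (if odd (k mod 2 ^ n div 2 ^ t) then 2 ^ (n - 1 - t) else 0)"
      by simp
  qed
  then show ?thesis
    by (simp add: bitrev_def odd_iff_mod_2_eq_one)
qed

lemma bitrev_less: "bitrev n k < 2 ^ n"
proof (induction n arbitrary: k)
  case (Suc n)
  have "k div 2 ^ n mod 2 \<le> 1" by simp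
  then show ?case using Suc[of "k mod 2 ^ n"] by (simp add: bitrev_Suc)
qed (simp add: bitrev_def)

lemma polar_mat_eq: "polar_mat n k l = kron_pow n (bitrev n k) l"
proof -
  have "(\<Sum>m<2^n. bitrev_mat n k m * kron_pow n m l) = kron_pow n (bitrev n k) l"
    using bitrev_less[of n k] by (simp add: bitrev_mat_def if_distrib[of "\<lambda>x. x * _"] cong: if_cong)
  then show ?thesis
    using kron_pow_le_1[of n "bitrev n k" l] by (simp add: polar_mat_def)
qed

lemma kron_pow_bitrev_Suc:
  assumes "k < 2 ^ Suc n"
  shows "kron_pow (Suc n) (bitrev (Suc n) k) l =
    kron_pow n (bitrev n (k mod 2 ^ n)) (l div 2) * G2 (k div 2 ^ n) (l mod 2)"
proof -
  have "k div 2 ^ n < 2" using assms by (simp add: div_less_iff_less_mult)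
  then have "k div 2 ^ n mod 2 = k div 2 ^ n" by simp
  then show ?thesis by (simp only: kron_pow_Suc_low bitrev_Suc) simp
qed

definition polar_count :: "nat \<Rightarrow> bool list \<Rightarrow> nat \<Rightarrow> nat" where
  "polar_count n xs l = (\<Sum>k<2^n. (if xs ! k then 1 else 0) * kron_pow n (bitrev n k) l)"

lemma polar_count_append:
  assumes "length xs1 = 2 ^ n"
  shows "polar_count (Suc n) (xs1 @ xs2) l =
    (if even l then polar_count n xs1 (l div 2) + polar_count n xs2 (l div 2)
     else polar_count n xs2 (l div 2))"
proof -
  let ?f = "\<lambda>xs k. (if xs ! k then 1 else 0) * kron_pow n (bitrev n k) (l div 2)"
  have lower: "(if (xs1 @ xs2) ! k then 1 else 0) * kron_pow (Suc n) (bitrev (Suc n) k) l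
      = ?f xs1 k * G2 0 (l mod 2)" if "k < 2 ^ n" for k
  proof -
    have "k < 2 ^ Suc n" using that by simp
    with that assms show ?thesis by (simp only: kron_pow_bitrev_Suc) (simp add: nth_append)
  qed
  have upper: "(if (xs1 @ xs2) ! (2 ^ n + k) then 1 else 0) * kron_pow (Suc n) (bitrev (Suc n) (2 ^ n + k)) l
      = ?f xs2 k * G2 1 (l mod 2)" if "k < 2 ^ n" for k
  proof -
    have "2 ^ n + k < 2 ^ Suc n" using that by simp
    with that assms show ?thesis by (simp only: kron_pow_bitrev_Suc) (simp add: nth_append)
  qed
  have "polar_count (Suc n) (xs1 @ xs2) l =
      (\<Sum>k<2^n. ?f xs1 k * G2 0 (l mod 2)) + (\<Sum>k<2^n. ?f xs2 k * G2 1 (l mod 2))"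
    unfolding polar_count_def power_Suc mult_2 sum_lessThan_add
    by (intro arg_cong2[where f = "(+)"] sum.cong refl) (simp_all only: lessThan_iff lower upper)
  then show ?thesis
    by (simp add: polar_count_def G2_def sum_distrib_right[symmetric] even_iff_mod_2_eq_zero)
qed

lemma polar_append:
  assumes "length xs1 = 2 ^ n"
  shows "polar (Suc n) (xs1 @ xs2) = butterfly (polar n xs1) (polar n xs2)"
proof -
  have polar_eq: "polar m xs = map (\<lambda>l. odd (polar_count m xs l)) [0..<2 ^ m]" for m xs
    by (simp add: polar_def polar_count_def polar_mat_eq odd_iff_mod_2_eq_one)
  show ?thesis
    by (rule nth_equalityI)
      (auto simp: polar_eq nth_butterfly polar_count_append[OF assms] less_mult_imp_div_less)
qed

lemma length_polar [simp]: "length (polar n xs) = 2 ^ n"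
  by (simp add: polar_def)

lemma polar_Suc:
  "length xs = 2 ^ Suc n \<Longrightarrow>
    polar (Suc n) xs = butterfly (polar n (take (2 ^ n) xs)) (polar n (drop (2 ^ n) xs))"
  using polar_append[of "take (2 ^ n) xs" n "drop (2 ^ n) xs"] by simp

section \<open>Path weights of the state chain\<close>

text \<open>path_weight W xs ys a b is the probability of emitting (X_1^k, Y_1^k) = (xs, ys) and
  ending in state b, started in state a.\<close>
fun path_weight :: "('s::finite \<Rightarrow> bool \<times> 'y \<times> 's \<Rightarrow> real) \<Rightarrow> bool list \<Rightarrow> 'y list \<Rightarrow> 's \<Rightarrow> 's \<Rightarrow> real" where
  "path_weight W [] ys a b = (if a = b then 1 else 0)"
| "path_weight W (x # xs) ys a b = (\<Sum>c\<in>UNIV. W a (x, hd ys, c) * path_weight W xs (tl ys) c b)"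

lemma path_weight_append:
  "length xs1 = length ys1 \<Longrightarrow>
    path_weight W (xs1 @ xs2) (ys1 @ ys2) a b =
    (\<Sum>m\<in>UNIV. path_weight W xs1 ys1 a m * path_weight W xs2 ys2 m b)"
proof (induction xs1 arbitrary: ys1 a)
  case Nil
  then show ?case by (simp add: if_distrib[of "\<lambda>x. x * _"] cong: if_cong)
next
  case (Cons x xs1)
  then obtain y ys1' where "ys1 = y # ys1'" "length xs1 = length ys1'"
    by (cases ys1) auto
  with Cons.IH show ?case
    by (simp add: sum_distrib_left sum_distrib_right mult.assoc) (rule sum.swap)
qed

lemma sum_UNIV_triple:
  fixes f :: "'a::finite \<times> 'b::finite \<times> 'c::finite \<Rightarrow> 'd::comm_monoid_add"
  shows "(\<Sum>t\<in>UNIV. f t) = (\<Sum>x\<in>UNIV. \<Sum>y\<in>UNIV. \<Sum>c\<in>UNIV. f (x, y, c))"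
  by (simp add: sum.cartesian_product flip: UNIV_Times_UNIV)

lemma sum_path_weight_eq_1:
  fixes W :: "'s::finite \<Rightarrow> bool \<times> 'y::finite \<times> 's \<Rightarrow> real"
  assumes "\<And>a. (\<Sum>t\<in>UNIV. W a t) = 1"
  shows "(\<Sum>xs\<in>lists_of_len k. \<Sum>ys\<in>lists_of_len k. \<Sum>b\<in>UNIV. path_weight W xs ys a b) = 1"
proof (induction k arbitrary: a)
  case (Suc k)
  have "(\<Sum>xs\<in>lists_of_len (Suc k). \<Sum>ys\<in>lists_of_len (Suc k). \<Sum>b\<in>UNIV. path_weight W xs ys a b) =
      (\<Sum>x\<in>UNIV. \<Sum>y\<in>UNIV. \<Sum>c\<in>UNIV. W a (x, y, c) *
        (\<Sum>xs\<in>lists_of_len k. \<Sum>ys\<in>lists_of_len k. \<Sum>b\<in>UNIV. path_weight W xs ys c b))"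
    apply (simp add: sum_lists_of_len_Suc sum_distrib_left
        sum.swap[where A = "lists_of_len k :: bool list set" and B = "UNIV :: 'y set"]
        sum.swap[where A = "lists_of_len k :: bool list set" and B = "UNIV :: 's set"]
        sum.swap[where A = "lists_of_len k :: 'y list set" and B = "UNIV :: 's set"])
    apply (rule sum.cong[OF refl], rule sum.cong[OF refl], rule sum.swap)
    done
  also have "\<dots> = 1"
    using Suc assms by (simp add: sum_UNIV_triple)
  finally show ?case .
qed simp

lemma state_trans_eq: "state_trans W a c = (\<Sum>x\<in>UNIV. \<Sum>y\<in>UNIV. W a (x, y, c))"
  for W :: "'s \<Rightarrow> bool \<times> 'y::finite \<times> 's \<Rightarrow> real"
  unfolding state_trans_def
  by (simp add: sum.cartesian_product case_prod_beta flip: UNIV_Times_UNIV)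

lemma sum_stationary_path_weight:
  fixes W :: "'s::finite \<Rightarrow> bool \<times> 'y::finite \<times> 's \<Rightarrow> real"
  assumes stationary: "\<And>b. (\<Sum>a\<in>UNIV. \<pi> a * state_trans W a b) = \<pi> b"
  shows "(\<Sum>xs\<in>lists_of_len k. \<Sum>ys\<in>lists_of_len k. \<Sum>a\<in>UNIV. \<pi> a * path_weight W xs ys a b) = \<pi> b"
proof (induction k)
  case 0
  then show ?case by (simp add: if_distrib[of "\<lambda>x. _ * x"] cong: if_cong)
next
  case (Suc k)
  have step: "(\<Sum>x\<in>UNIV. \<Sum>y\<in>UNIV. \<Sum>a\<in>UNIV. \<pi> a * W a (x, y, c)) = \<pi> c" for c
    using stationary[of c]
    by (simp add: state_trans_eq sum_distrib_left sum.swap[of _ "UNIV :: 's set"])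
  have "(\<Sum>xs\<in>lists_of_len (Suc k). \<Sum>ys\<in>lists_of_len (Suc k). \<Sum>a\<in>UNIV. \<pi> a * path_weight W xs ys a b) =
      (\<Sum>xs\<in>lists_of_len k. \<Sum>ys\<in>lists_of_len k. \<Sum>c\<in>UNIV.
        (\<Sum>x\<in>UNIV. \<Sum>y\<in>UNIV. \<Sum>a\<in>UNIV. \<pi> a * W a (x, y, c)) * path_weight W xs ys c b)"
    apply (simp add: sum_lists_of_len_Suc sum_distrib_left sum_distrib_right mult.assoc
        sum.swap[where A = "UNIV :: bool set" and B = "lists_of_len k :: bool list set"]
        sum.swap[where A = "UNIV :: bool set" and B = "lists_of_len k :: 'y list set"]
        sum.swap[where A = "UNIV :: 'y set" and B = "lists_of_len k :: 'y list set"]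
        sum.swap[where A = "UNIV :: 's set" and B = "UNIV :: bool set"]
        sum.swap[where A = "UNIV :: 's set" and B = "UNIV :: 'y set"])
    apply (rule sum.cong[OF refl], rule sum.cong[OF refl], rule sum.cong[OF refl],
        rule sum.cong[OF refl], rule sum.swap)
    done
  also have "\<dots> = \<pi> b"
    using Suc by (simp add: step)
  finally show ?case .
qed

lemma sum_path_products_eq_path_weight:
  "length ys = length xs \<Longrightarrow>
    (\<Sum>ss\<in>lists_of_len (Suc (length xs)). if ss ! 0 = a \<and> ss ! length xs = b
        then (\<Prod>j<length xs. W (ss ! j) (xs ! j, ys ! j, ss ! Suc j)) else 0) =
    path_weight W xs ys a b"
proof (induction xs arbitrary: ys a)
  case Nil
  have empty: "lists_of_len 0 = {[]}" by auto
  show ?case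
    by (simp only: sum_lists_of_len_Suc list.size(3) empty) (cases "a = b"; auto intro: sum.neutral)
next
  case (Cons x xs)
  then obtain y ys' where ys: "ys = y # ys'" "length ys' = length xs" by (cases ys) auto
  let ?k = "length xs"
  let ?P = "\<lambda>ss. \<Prod>j<?k. W (ss ! j) (xs ! j, ys' ! j, ss ! Suc j)"
  have "(\<Sum>ss\<in>lists_of_len (Suc (length (x # xs))). if ss ! 0 = a \<and> ss ! length (x # xs) = b
        then (\<Prod>j<length (x # xs). W (ss ! j) ((x # xs) ! j, ys ! j, ss ! Suc j)) else 0) =
      (\<Sum>s\<in>UNIV. \<Sum>ss\<in>lists_of_len (Suc ?k).
        if s = a \<and> ss ! ?k = b then W s (x, y, ss ! 0) * ?P ss else 0)"
    unfolding length_Cons sum_lists_of_len_Suc[of _ "Suc ?k"]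
    by (intro sum.cong[OF refl]) (simp add: ys prod.lessThan_Suc_shift del: prod.lessThan_Suc)
  also have "\<dots> = (\<Sum>ss\<in>lists_of_len (Suc ?k). if ss ! ?k = b then W a (x, y, ss ! 0) * ?P ss else 0)"
  proof -
    have "(\<Sum>s\<in>UNIV. if s = a \<and> Q then F s else 0) = (if Q then F a else (0::real))" for Q F
      by (cases Q) simp_all
    then show ?thesis by (subst sum.swap) simp
  qed
  also have "\<dots> = (\<Sum>ss\<in>lists_of_len (Suc ?k). \<Sum>c\<in>UNIV.
      W a (x, y, c) * (if ss ! 0 = c \<and> ss ! ?k = b then ?P ss else 0))"
    by (rule sum.cong[OF refl]) (simp add: if_distrib[of "\<lambda>z. _ * z"] cong: if_cong)
  also have "\<dots> = (\<Sum>c\<in>UNIV. W a (x, y, c) * path_weight W xs ys' c b)"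
    by (subst sum.swap) (simp only: sum_distrib_left[symmetric] Cons.IH[OF ys(2)])
  finally show ?case by (simp add: ys)
qed

lemma trans_pow_nonneg: "(\<And>a b. P a b \<ge> 0) \<Longrightarrow> trans_pow P m a b \<ge> 0"
  by (induction m arbitrary: b) (auto intro!: sum_nonneg)

lemma stationary_trans_pow:
  fixes \<pi> :: "'s::finite \<Rightarrow> real"
  assumes "\<And>b. (\<Sum>a\<in>UNIV. \<pi> a * P a b) = \<pi> b"
  shows "(\<Sum>a\<in>UNIV. \<pi> a * trans_pow P m a b) = \<pi> b"
proof (induction m arbitrary: b)
  case 0
  then show ?case by (simp add: if_distrib[of "\<lambda>x. _ * x"] cong: if_cong)
next
  case (Suc m)
  have "(\<Sum>a\<in>UNIV. \<pi> a * trans_pow P (Suc m) a b) =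
      (\<Sum>c\<in>UNIV. (\<Sum>a\<in>UNIV. \<pi> a * trans_pow P m a c) * P c b)"
    by (simp add: sum_distrib_left sum_distrib_right mult.assoc) (rule sum.swap)
  with Suc assms show ?case by simp
qed

text \<open>Every state is reached from one of positive stationary mass, which passes some of it on.\<close>
lemma stationary_pos_if_irreducible:
  fixes \<pi> :: "'s::finite \<Rightarrow> real"
  assumes "\<And>a b. P a b \<ge> 0" "\<And>a. \<pi> a \<ge> 0" "(\<Sum>a\<in>UNIV. \<pi> a) = 1"
    and "\<And>b. (\<Sum>a\<in>UNIV. \<pi> a * P a b) = \<pi> b"
    and "irreducible_chain P"
  shows "\<pi> b > 0"
proof -
  obtain a0 where a0: "\<pi> a0 > 0"
  proof (rule ccontr)
    assume "\<not> thesis"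
    with that have "\<pi> a \<le> 0" for a by (meson not_le)
    then have "(\<Sum>a\<in>UNIV. \<pi> a) \<le> 0" by (simp add: sum_nonpos)
    with assms(3) show False by simp
  qed
  obtain m where "trans_pow P m a0 b > 0"
    using assms(5) unfolding irreducible_chain_def by blast
  with a0 have "0 < \<pi> a0 * trans_pow P m a0 b" by simp
  also have "\<dots> \<le> (\<Sum>a\<in>UNIV. \<pi> a * trans_pow P m a b)"
    by (rule member_le_sum) (auto intro: mult_nonneg_nonneg assms trans_pow_nonneg)
  also have "\<dots> = \<pi> b"
    using assms(4) by (rule stationary_trans_pow)
  finally show ?thesis .
qed

lemma faim_stationary_pos:
  assumes "is_faim W \<pi>"
  shows "\<pi> b > 0"
proof (rule stationary_pos_if_irreducible[of "state_trans W"])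
  show "state_trans W a c \<ge> 0" for a c
    using assms unfolding is_faim_def state_trans_def by (auto intro: sum_nonneg)
qed (use assms in \<open>simp_all add: is_faim_def\<close>)

section \<open>Events and the Markov split at the junction\<close>

definition event_prob :: "('s::finite \<Rightarrow> bool \<times> 'y \<times> 's \<Rightarrow> real) \<Rightarrow> ('s \<Rightarrow> real) \<Rightarrow>
    (bool list \<Rightarrow> bool) \<Rightarrow> 'y list \<Rightarrow> 's \<Rightarrow> 's \<Rightarrow> real" where
  "event_prob W \<pi> E ys a b =
    (\<Sum>xs\<in>lists_of_len (length ys). if E xs then \<pi> a * path_weight W xs ys a b else 0)"

lemma joint_UQ_eq_event_prob:
  fixes W :: "'s::finite \<Rightarrow> bool \<times> 'y::finite \<times> 's \<Rightarrow> real"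
  assumes "length ys = 2 ^ n"
  shows "joint_UQ W \<pi> n i u pre ys a b = event_prob W \<pi> (\<lambda>xs. take i (polar n xs) = pre @ [u]) ys a b"
  unfolding joint_UQ_def event_prob_def assms
proof (rule sum.cong[OF refl])
  fix xs :: "bool list" assume "xs \<in> lists_of_len (2 ^ n)"
  then have len: "length xs = 2 ^ n" by simp
  let ?S = "{ss :: 's list. length ss = 2 ^ n + 1 \<and> ss ! 0 = a \<and> ss ! (2 ^ n) = b}"
  have "?S = {ss \<in> lists_of_len (Suc (length xs)). ss ! 0 = a \<and> ss ! length xs = b}"
    using len by auto
  then have "(\<Sum>ss\<in>?S. faim_prob W \<pi> xs ys ss) = (\<Sum>ss\<in>lists_of_len (Suc (length xs)).
      if ss ! 0 = a \<and> ss ! length xs = b then faim_prob W \<pi> xs ys ss else 0)"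
    by (simp only: sum.inter_filter[OF finite_lists_of_len])
  also have "\<dots> = (\<Sum>ss\<in>lists_of_len (Suc (length xs)).
      \<pi> a * (if ss ! 0 = a \<and> ss ! length xs = b
        then \<Prod>j<length xs. W (ss ! j) (xs ! j, ys ! j, ss ! Suc j) else 0))"
    by (rule sum.cong[OF refl]) (auto simp: faim_prob_def)
  also have "\<dots> = \<pi> a * path_weight W xs ys a b"
    by (simp only: sum_distrib_left[symmetric])
      (use sum_path_products_eq_path_weight[of ys xs a b W] len assms in simp)
  finally show "(\<Sum>ss\<in>?S. if take i (polar n xs) = pre @ [u] then faim_prob W \<pi> xs ys ss else 0) =
      (if take i (polar n xs) = pre @ [u] then \<pi> a * path_weight W xs ys a b else 0)"
    by simp
qed

lemma event_prob_cong:
  "(\<And>xs. length xs = length ys \<Longrightarrow> E xs = E' xs) \<Longrightarrow> event_prob W \<pi> E ys a b = event_prob W \<pi> E' ys a b"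
  unfolding event_prob_def by (intro sum.cong refl) auto

lemma event_prob_disj:
  "(\<And>xs. \<not> (E xs \<and> E' xs)) \<Longrightarrow>
    event_prob W \<pi> (\<lambda>xs. E xs \<or> E' xs) ys a b = event_prob W \<pi> E ys a b + event_prob W \<pi> E' ys a b"
  unfolding event_prob_def sum.distrib[symmetric] by (intro sum.cong refl) auto

lemma sum_event_prob_fibres:
  assumes "finite C" "\<And>xs. length xs = length ys \<Longrightarrow> f xs \<in> C"
  shows "(\<Sum>c\<in>C. event_prob W \<pi> (\<lambda>xs. f xs = c) ys a b) =
    \<pi> a * (\<Sum>xs\<in>lists_of_len (length ys). path_weight W xs ys a b)"
  unfolding event_prob_def sum_distrib_left
  by (subst sum.swap) (simp add: assms)

text \<open>Markov property at the middle time: given the state there, the two halves are independent.\<close>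
lemma event_prob_append:
  assumes "\<And>m. \<pi> m \<noteq> 0"
  shows "event_prob W \<pi> (\<lambda>xs. P (take (length ys) xs) \<and> Q (drop (length ys) xs)) (ys @ zs) a b =
    (\<Sum>m\<in>UNIV. event_prob W \<pi> P ys a m * event_prob W \<pi> Q zs m b / \<pi> m)"
proof -
  let ?l = "length ys" and ?l' = "length zs"
  let ?f = "\<lambda>xs1 xs2 m. (if P xs1 then \<pi> a * path_weight W xs1 ys a m else 0) *
    (if Q xs2 then \<pi> m * path_weight W xs2 zs m b else 0) / \<pi> m"
  have split: "(if P xs1 \<and> Q xs2 then \<pi> a * path_weight W (xs1 @ xs2) (ys @ zs) a b else 0) =
      (\<Sum>m\<in>UNIV. ?f xs1 xs2 m)" if "length xs1 = ?l" for xs1 xs2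
  proof (cases "P xs1 \<and> Q xs2")
    case True
    with that assms show ?thesis by (simp add: path_weight_append sum_distrib_left)
  qed auto
  have "event_prob W \<pi> (\<lambda>xs. P (take ?l xs) \<and> Q (drop ?l xs)) (ys @ zs) a b =
      (\<Sum>xs1\<in>lists_of_len ?l. \<Sum>xs2\<in>lists_of_len ?l'. \<Sum>m\<in>UNIV. ?f xs1 xs2 m)"
    unfolding event_prob_def length_append sum_lists_of_len_add
    by (intro sum.cong refl) (simp add: split)
  also have "\<dots> = (\<Sum>m\<in>UNIV. \<Sum>xs1\<in>lists_of_len ?l. \<Sum>xs2\<in>lists_of_len ?l'. ?f xs1 xs2 m)"
    by (simp only: sum.swap[of _ _ UNIV])
  also have "\<dots> = (\<Sum>m\<in>UNIV. event_prob W \<pi> P ys a m * event_prob W \<pi> Q zs m b / \<pi> m)"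
    by (simp add: event_prob_def sum_product sum_divide_distrib)
  finally show ?thesis .
qed

definition joint_gap :: "('s::finite \<Rightarrow> bool \<times> 'y::finite \<times> 's \<Rightarrow> real) \<Rightarrow> ('s \<Rightarrow> real) \<Rightarrow>
    nat \<Rightarrow> nat \<Rightarrow> bool list \<Rightarrow> 'y list \<Rightarrow> 's \<Rightarrow> 's \<Rightarrow> real" where
  "joint_gap W \<pi> n i pre ys a b = joint_UQ W \<pi> n i False pre ys a b - joint_UQ W \<pi> n i True pre ys a b"

lemma Khat_eq_sum_joint_gap:
  "Khat W \<pi> n i = (\<Sum>pre\<in>lists_of_len (i - 1). \<Sum>ys\<in>lists_of_len (2 ^ n). \<Sum>a\<in>UNIV. \<Sum>b\<in>UNIV.
    \<bar>joint_gap W \<pi> n i pre ys a b\<bar>)"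
  by (simp add: Khat_def joint_gap_def)

lemma joint_UQ_Suc_eq_event_prob:
  fixes W :: "'s::finite \<Rightarrow> bool \<times> 'y::finite \<times> 's \<Rightarrow> real"
  assumes "length ys1 = 2 ^ n" "length ys2 = 2 ^ n"
  shows "joint_UQ W \<pi> (Suc n) i u pre (ys1 @ ys2) a b = event_prob W \<pi>
    (\<lambda>xs. take i (butterfly (polar n (take (2 ^ n) xs)) (polar n (drop (2 ^ n) xs))) = pre @ [u])
    (ys1 @ ys2) a b"
  using assms by (simp add: joint_UQ_eq_event_prob) (rule event_prob_cong, simp add: polar_Suc)

lemma event_prob_polar_halves:
  fixes W :: "'s::finite \<Rightarrow> bool \<times> 'y::finite \<times> 's \<Rightarrow> real"
  assumes "is_faim W \<pi>" "length ys1 = 2 ^ n" "length ys2 = 2 ^ n"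
  shows "event_prob W \<pi> (\<lambda>xs. take i (polar n (take (2 ^ n) xs)) = p @ [e] \<and>
      take i (polar n (drop (2 ^ n) xs)) = q @ [e']) (ys1 @ ys2) a b =
    (\<Sum>m\<in>UNIV. joint_UQ W \<pi> n i e p ys1 a m * joint_UQ W \<pi> n i e' q ys2 m b / \<pi> m)"
proof -
  have "\<pi> m \<noteq> 0" for m
    using faim_stationary_pos[OF assms(1)] by (simp add: less_imp_neq[symmetric])
  from event_prob_append[where \<pi> = \<pi> and W = W and ys = ys1 and zs = ys2 and a = a and b = b
      and P = "\<lambda>xs. take i (polar n xs) = p @ [e]" and Q = "\<lambda>xs. take i (polar n xs) = q @ [e']", OF this]
  show ?thesis
    using assms by (simp add: joint_UQ_eq_event_prob)
qed

lemma joint_gap_Suc_odd: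
  fixes W :: "'s::finite \<Rightarrow> bool \<times> 'y::finite \<times> 's \<Rightarrow> real"
  assumes "is_faim W \<pi>" "length ys1 = 2 ^ n" "length ys2 = 2 ^ n"
    and "length p = k" "length q = k" "k < 2 ^ n"
  shows "joint_gap W \<pi> (Suc n) (Suc (2 * k)) (butterfly p q) (ys1 @ ys2) a b =
    (\<Sum>m\<in>UNIV. joint_gap W \<pi> n (Suc k) p ys1 a m * joint_gap W \<pi> n (Suc k) q ys2 m b / \<pi> m)"
proof -
  let ?E = "\<lambda>e e' xs. take (Suc k) (polar n (take (2 ^ n) xs)) = p @ [e] \<and>
    take (Suc k) (polar n (drop (2 ^ n) xs)) = q @ [e']"
  let ?J = "\<lambda>e e' m. joint_UQ W \<pi> n (Suc k) e p ys1 a m * joint_UQ W \<pi> n (Suc k) e' q ys2 m b / \<pi> m"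
  have "joint_UQ W \<pi> (Suc n) (Suc (2 * k)) u (butterfly p q) (ys1 @ ys2) a b =
      event_prob W \<pi> (\<lambda>xs. ?E True (True \<noteq> u) xs \<or> ?E False (False \<noteq> u) xs) (ys1 @ ys2) a b" for u
    using assms
    by (simp only: joint_UQ_Suc_eq_event_prob) (rule event_prob_cong, simp add: take_butterfly_Suc_double_eq_iff ex_bool_eq)
  also have "\<dots> u = (\<Sum>m\<in>UNIV. ?J True (True \<noteq> u) m) + (\<Sum>m\<in>UNIV. ?J False (False \<noteq> u) m)" for u
    using assms by (simp add: event_prob_disj event_prob_polar_halves)
  finally have split: "joint_UQ W \<pi> (Suc n) (Suc (2 * k)) u (butterfly p q) (ys1 @ ys2) a b =
      (\<Sum>m\<in>UNIV. ?J True (True \<noteq> u) m + ?J False (False \<noteq> u) m)" for u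
    by (simp add: sum.distrib)
  show ?thesis
    unfolding joint_gap_def split sum_subtractf[symmetric]
    by (intro sum.cong refl) (simp add: algebra_simps add_divide_distrib diff_divide_distrib)
qed

lemma joint_gap_Suc_even:
  fixes W :: "'s::finite \<Rightarrow> bool \<times> 'y::finite \<times> 's \<Rightarrow> real"
  assumes "is_faim W \<pi>" "length ys1 = 2 ^ n" "length ys2 = 2 ^ n"
    and "length p = k" "length q = k" "k < 2 ^ n"
  shows "joint_gap W \<pi> (Suc n) (Suc (Suc (2 * k))) (butterfly p q @ [g]) (ys1 @ ys2) a b =
    (\<Sum>m\<in>UNIV. (joint_UQ W \<pi> n (Suc k) g p ys1 a m * joint_UQ W \<pi> n (Suc k) False q ys2 m b -
      joint_UQ W \<pi> n (Suc k) (\<not> g) p ys1 a m * joint_UQ W \<pi> n (Suc k) True q ys2 m b) / \<pi> m)"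
proof -
  have "joint_UQ W \<pi> (Suc n) (Suc (Suc (2 * k))) u (butterfly p q @ [g]) (ys1 @ ys2) a b =
      event_prob W \<pi> (\<lambda>xs. take (Suc k) (polar n (take (2 ^ n) xs)) = p @ [g \<noteq> u] \<and>
        take (Suc k) (polar n (drop (2 ^ n) xs)) = q @ [u]) (ys1 @ ys2) a b" for u
    using assms take_double_Suc_butterfly_eq_iff[of k _ _ p q g u]
    by (simp only: joint_UQ_Suc_eq_event_prob) (rule event_prob_cong, simp)
  then show ?thesis
    using assms by (simp add: joint_gap_def event_prob_polar_halves diff_divide_distrib sum_subtractf)
qed

lemma sum_joint_UQ_prefixes:
  fixes W :: "'s::finite \<Rightarrow> bool \<times> 'y::finite \<times> 's \<Rightarrow> real"
  assumes "length ys = 2 ^ n" "k < 2 ^ n"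
  shows "(\<Sum>p\<in>lists_of_len k. joint_UQ W \<pi> n (Suc k) False p ys a b + joint_UQ W \<pi> n (Suc k) True p ys a b) =
    \<pi> a * (\<Sum>xs\<in>lists_of_len (2 ^ n). path_weight W xs ys a b)"
proof -
  have "(\<Sum>p\<in>lists_of_len k. joint_UQ W \<pi> n (Suc k) False p ys a b + joint_UQ W \<pi> n (Suc k) True p ys a b) =
      (\<Sum>c\<in>lists_of_len (Suc k). event_prob W \<pi> (\<lambda>xs. take (Suc k) (polar n xs) = c) ys a b)"
    using assms(1) by (simp add: sum_lists_of_len_snoc UNIV_bool joint_UQ_eq_event_prob add.commute)
  also have "\<dots> = \<pi> a * (\<Sum>xs\<in>lists_of_len (2 ^ n). path_weight W xs ys a b)"
    using assms by (subst sum_event_prob_fibres) auto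
  finally show ?thesis .
qed

lemma sum_joint_UQ_into_state:
  fixes W :: "'s::finite \<Rightarrow> bool \<times> 'y::finite \<times> 's \<Rightarrow> real"
  assumes "is_faim W \<pi>" "k < 2 ^ n"
  shows "(\<Sum>p\<in>lists_of_len k. \<Sum>ys\<in>lists_of_len (2 ^ n). \<Sum>a\<in>UNIV.
    joint_UQ W \<pi> n (Suc k) False p ys a m + joint_UQ W \<pi> n (Suc k) True p ys a m) = \<pi> m"
proof -
  have "(\<Sum>p\<in>lists_of_len k. \<Sum>ys\<in>lists_of_len (2 ^ n). \<Sum>a\<in>UNIV.
      joint_UQ W \<pi> n (Suc k) False p ys a m + joint_UQ W \<pi> n (Suc k) True p ys a m) =
      (\<Sum>ys\<in>lists_of_len (2 ^ n). \<Sum>a\<in>UNIV. \<Sum>p\<in>lists_of_len k.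
      joint_UQ W \<pi> n (Suc k) False p ys a m + joint_UQ W \<pi> n (Suc k) True p ys a m)"
    by (rule sum_pull_outermost[symmetric])
  also have "\<dots> = (\<Sum>ys\<in>lists_of_len (2 ^ n). \<Sum>a\<in>UNIV. \<Sum>xs\<in>lists_of_len (2 ^ n).
      \<pi> a * path_weight W xs ys a m)"
    by (rule sum.cong[OF refl], rule sum.cong[OF refl])
      (use assms(2) in \<open>simp add: sum_joint_UQ_prefixes sum_distrib_left\<close>)
  also have "\<dots> = (\<Sum>xs\<in>lists_of_len (2 ^ n). \<Sum>ys\<in>lists_of_len (2 ^ n). \<Sum>a\<in>UNIV.
      \<pi> a * path_weight W xs ys a m)"
    by (rule sum_pull_outermost)
  also have "\<dots> = \<pi> m"
    by (rule sum_stationary_path_weight) (use assms(1) in \<open>simp add: is_faim_def\<close>)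
  finally show ?thesis .
qed

lemma sum_joint_UQ_from_state:
  fixes W :: "'s::finite \<Rightarrow> bool \<times> 'y::finite \<times> 's \<Rightarrow> real"
  assumes "is_faim W \<pi>" "k < 2 ^ n"
  shows "(\<Sum>p\<in>lists_of_len k. \<Sum>ys\<in>lists_of_len (2 ^ n). \<Sum>b\<in>UNIV.
    joint_UQ W \<pi> n (Suc k) False p ys m b + joint_UQ W \<pi> n (Suc k) True p ys m b) = \<pi> m"
proof -
  have "(\<Sum>p\<in>lists_of_len k. \<Sum>ys\<in>lists_of_len (2 ^ n). \<Sum>b\<in>UNIV.
      joint_UQ W \<pi> n (Suc k) False p ys m b + joint_UQ W \<pi> n (Suc k) True p ys m b) =
      (\<Sum>ys\<in>lists_of_len (2 ^ n). \<Sum>b\<in>UNIV. \<Sum>p\<in>lists_of_len k.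
      joint_UQ W \<pi> n (Suc k) False p ys m b + joint_UQ W \<pi> n (Suc k) True p ys m b)"
    by (rule sum_pull_outermost[symmetric])
  also have "\<dots> = \<pi> m * (\<Sum>ys\<in>lists_of_len (2 ^ n). \<Sum>b\<in>UNIV. \<Sum>xs\<in>lists_of_len (2 ^ n).
      path_weight W xs ys m b)"
    unfolding sum_distrib_left
    by (rule sum.cong[OF refl], rule sum.cong[OF refl])
      (use assms(2) in \<open>simp add: sum_joint_UQ_prefixes sum_distrib_left\<close>)
  also have "\<dots> = \<pi> m * (\<Sum>xs\<in>lists_of_len (2 ^ n). \<Sum>ys\<in>lists_of_len (2 ^ n). \<Sum>b\<in>UNIV.
      path_weight W xs ys m b)"
    by (rule arg_cong[where f = "(*) (\<pi> m)"], rule sum_pull_outermost)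
  also have "\<dots> = \<pi> m"
    using assms(1) sum_path_weight_eq_1[where W = W and k = "2 ^ n" and a = m] by (simp add: is_faim_def)
  finally show ?thesis .
qed

lemma sum_mult_le_sum_mult_sum:
  fixes X Y :: "'a \<Rightarrow> real"
  assumes "finite S" "\<And>m. X m \<ge> 0" "\<And>m. Y m \<ge> 0"
  shows "(\<Sum>m\<in>S. X m * Y m) \<le> (\<Sum>m\<in>S. X m) * (\<Sum>m\<in>S. Y m)"
proof -
  have "(\<Sum>m\<in>S. X m * Y m) \<le> (\<Sum>m\<in>S. X m * (\<Sum>m'\<in>S. Y m'))"
    using assms by (intro sum_mono mult_left_mono member_le_sum) auto
  then show ?thesis by (simp add: sum_distrib_right)
qed

lemma sum_abs_chain_le:
  fixes F G :: "'p \<Rightarrow> 'q \<Rightarrow> 's \<Rightarrow> 's \<Rightarrow> real"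
  assumes "finite S" "\<And>m. d m > 0" "\<And>m. 1 / d m \<le> C"
  shows "(\<Sum>p1\<in>A. \<Sum>p2\<in>A. \<Sum>y1\<in>Y. \<Sum>y2\<in>Y. \<Sum>a\<in>S. \<Sum>b\<in>S.
      \<bar>\<Sum>m\<in>S. F p1 y1 a m * G p2 y2 m b / d m\<bar>) \<le>
    C * ((\<Sum>p\<in>A. \<Sum>y\<in>Y. \<Sum>a\<in>S. \<Sum>m\<in>S. \<bar>F p y a m\<bar>) * (\<Sum>p\<in>A. \<Sum>y\<in>Y. \<Sum>m\<in>S. \<Sum>b\<in>S. \<bar>G p y m b\<bar>))"
proof -
  define X where "X m = (\<Sum>p\<in>A. \<Sum>y\<in>Y. \<Sum>a\<in>S. \<bar>F p y a m\<bar>)" for m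
  define Z where "Z m = (\<Sum>p\<in>A. \<Sum>y\<in>Y. \<Sum>b\<in>S. \<bar>G p y m b\<bar>)" for m
  have "0 < 1 / d undefined" using assms(2) by simp
  then have C: "C \<ge> 0" using assms(3)[of undefined] by linarith
  have term_le: "\<bar>\<Sum>m\<in>S. F p1 y1 a m * G p2 y2 m b / d m\<bar> \<le> (\<Sum>m\<in>S. \<bar>F p1 y1 a m\<bar> * (C * \<bar>G p2 y2 m b\<bar>))"
    for p1 p2 y1 y2 a b
  proof -
    have "\<bar>F p1 y1 a m * G p2 y2 m b / d m\<bar> = (1 / d m) * (\<bar>F p1 y1 a m\<bar> * \<bar>G p2 y2 m b\<bar>)" for m
      using assms(2)[of m] by (simp add: abs_mult)
    also have "\<dots> m \<le> C * (\<bar>F p1 y1 a m\<bar> * \<bar>G p2 y2 m b\<bar>)" for m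
      using assms(3) by (rule mult_right_mono) simp
    finally show ?thesis
      by (intro order.trans[OF sum_abs] sum_mono) (simp add: ac_simps)
  qed
  have "(\<Sum>p1\<in>A. \<Sum>p2\<in>A. \<Sum>y1\<in>Y. \<Sum>y2\<in>Y. \<Sum>a\<in>S. \<Sum>b\<in>S.
      \<bar>\<Sum>m\<in>S. F p1 y1 a m * G p2 y2 m b / d m\<bar>) \<le>
      (\<Sum>p1\<in>A. \<Sum>p2\<in>A. \<Sum>y1\<in>Y. \<Sum>y2\<in>Y. \<Sum>a\<in>S. \<Sum>b\<in>S.
        \<Sum>m\<in>S. \<bar>F p1 y1 a m\<bar> * (C * \<bar>G p2 y2 m b\<bar>))"
    by (intro sum_mono term_le)
  also have "\<dots> = C * (\<Sum>m\<in>S. X m * Z m)"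
    unfolding sum_chain_product X_def Z_def by (simp add: sum_distrib_left ac_simps)
  also have "\<dots> \<le> C * ((\<Sum>m\<in>S. X m) * (\<Sum>m\<in>S. Z m))"
    using C assms(1) by (intro mult_left_mono sum_mult_le_sum_mult_sum) (auto simp: X_def Z_def intro!: sum_nonneg)
  also have "(\<Sum>m\<in>S. X m) = (\<Sum>p\<in>A. \<Sum>y\<in>Y. \<Sum>a\<in>S. \<Sum>m\<in>S. \<bar>F p y a m\<bar>)"
    unfolding X_def by (rule sum_push_innermost)
  also have "(\<Sum>m\<in>S. Z m) = (\<Sum>p\<in>A. \<Sum>y\<in>Y. \<Sum>m\<in>S. \<Sum>b\<in>S. \<bar>G p y m b\<bar>)"
    unfolding Z_def by (rule sum_push_third)
  finally show ?thesis .
qed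

lemma abs_cross_diff_add_le:
  fixes a0 a1 d0 d1 :: real
  assumes "a0 \<ge> 0" "a1 \<ge> 0" "d0 \<ge> 0" "d1 \<ge> 0"
  shows "\<bar>a1 * d0 - a0 * d1\<bar> + \<bar>a0 * d0 - a1 * d1\<bar> \<le> (a0 + a1) * \<bar>d0 - d1\<bar> + (d0 + d1) * \<bar>a0 - a1\<bar>"
proof -
  have tri: "\<bar>(a0 + a1) * (d0 - d1) + c * (d0 + d1)\<bar> \<le> (a0 + a1) * \<bar>d0 - d1\<bar> + (d0 + d1) * \<bar>c\<bar>" for c
  proof -
    have "\<bar>(a0 + a1) * (d0 - d1)\<bar> = (a0 + a1) * \<bar>d0 - d1\<bar>" "\<bar>c * (d0 + d1)\<bar> = (d0 + d1) * \<bar>c\<bar>"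
      using assms by (simp_all add: abs_mult)
    with abs_triangle_ineq[of "(a0 + a1) * (d0 - d1)" "c * (d0 + d1)"] show ?thesis by simp
  qed
  have e1: "a1 * d0 - a0 * d1 = ((a0 + a1) * (d0 - d1) + (a1 - a0) * (d0 + d1)) / 2"
    and e2: "a0 * d0 - a1 * d1 = ((a0 + a1) * (d0 - d1) + (a0 - a1) * (d0 + d1)) / 2"
    by (simp_all add: field_simps)
  have "\<bar>(a0 + a1) * (d0 - d1) + (a1 - a0) * (d0 + d1)\<bar> \<le>
      (a0 + a1) * \<bar>d0 - d1\<bar> + (d0 + d1) * \<bar>a0 - a1\<bar>"
    using tri[of "a1 - a0"] by (simp add: abs_minus_commute)
  then show ?thesis
    unfolding e1 e2 using tri[of "a0 - a1"] by simp
qed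

text \<open>Summing over the last known bit g pairs up the two cross differences (abs_cross_diff_add_le);
  the masses F False + F True and G False + G True then cancel the weights 1 / d m.\<close>
lemma sum_abs_cross_chain_le:
  fixes F G :: "bool \<Rightarrow> 'p \<Rightarrow> 'q \<Rightarrow> 's \<Rightarrow> 's \<Rightarrow> real"
  assumes "finite S" "\<And>m. d m > 0" "\<And>e p y a m. F e p y a m \<ge> 0" "\<And>e p y m b. G e p y m b \<ge> 0"
    and F_mass: "\<And>m. (\<Sum>p\<in>A. \<Sum>y\<in>Y. \<Sum>a\<in>S. F False p y a m + F True p y a m) = d m"
    and G_mass: "\<And>m. (\<Sum>p\<in>A. \<Sum>y\<in>Y. \<Sum>b\<in>S. G False p y m b + G True p y m b) = d m"
  shows "(\<Sum>p1\<in>A. \<Sum>p2\<in>A. \<Sum>g\<in>UNIV. \<Sum>y1\<in>Y. \<Sum>y2\<in>Y. \<Sum>a\<in>S. \<Sum>b\<in>S.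
      \<bar>\<Sum>m\<in>S. (F g p1 y1 a m * G False p2 y2 m b - F (\<not> g) p1 y1 a m * G True p2 y2 m b) / d m\<bar>) \<le>
    (\<Sum>p\<in>A. \<Sum>y\<in>Y. \<Sum>a\<in>S. \<Sum>m\<in>S. \<bar>F False p y a m - F True p y a m\<bar>) +
    (\<Sum>p\<in>A. \<Sum>y\<in>Y. \<Sum>m\<in>S. \<Sum>b\<in>S. \<bar>G False p y m b - G True p y m b\<bar>)"
proof -
  let ?h = "\<lambda>g p1 y1 p2 y2 a b m. F g p1 y1 a m * G False p2 y2 m b - F (\<not> g) p1 y1 a m * G True p2 y2 m b"
  let ?sF = "\<lambda>p y a m. F False p y a m + F True p y a m"
  let ?sG = "\<lambda>p y m b. G False p y m b + G True p y m b"
  let ?dF = "\<lambda>p y a m. \<bar>F False p y a m - F True p y a m\<bar>"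
  let ?dG = "\<lambda>p y m b. \<bar>G False p y m b - G True p y m b\<bar>"
  have pair: "(\<Sum>g\<in>UNIV. \<bar>\<Sum>m\<in>S. ?h g p1 y1 p2 y2 a b m / d m\<bar>) \<le>
      (\<Sum>m\<in>S. ?sF p1 y1 a m * (?dG p2 y2 m b / d m) + ?dF p1 y1 a m * (?sG p2 y2 m b / d m))"
    for p1 y1 p2 y2 a b
  proof -
    have "(\<Sum>g\<in>UNIV. \<bar>\<Sum>m\<in>S. ?h g p1 y1 p2 y2 a b m / d m\<bar>) \<le>
        (\<Sum>g\<in>UNIV. \<Sum>m\<in>S. \<bar>?h g p1 y1 p2 y2 a b m\<bar> / d m)"
      using assms(2) by (intro sum_mono order.trans[OF sum_abs]) (simp add: abs_div abs_of_pos)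
    also have "\<dots> = (\<Sum>m\<in>S. (\<bar>?h True p1 y1 p2 y2 a b m\<bar> + \<bar>?h False p1 y1 p2 y2 a b m\<bar>) / d m)"
      by (simp add: UNIV_bool sum.distrib add_divide_distrib)
    also have "\<dots> \<le> (\<Sum>m\<in>S. ?sF p1 y1 a m * (?dG p2 y2 m b / d m) + ?dF p1 y1 a m * (?sG p2 y2 m b / d m))"
    proof (rule sum_mono)
      fix m
      have "\<bar>?h True p1 y1 p2 y2 a b m\<bar> + \<bar>?h False p1 y1 p2 y2 a b m\<bar> \<le>
          ?sF p1 y1 a m * ?dG p2 y2 m b + ?sG p2 y2 m b * ?dF p1 y1 a m"
        using abs_cross_diff_add_le assms(3,4) by simp
      then have "(\<bar>?h True p1 y1 p2 y2 a b m\<bar> + \<bar>?h False p1 y1 p2 y2 a b m\<bar>) / d m \<le>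
          (?sF p1 y1 a m * ?dG p2 y2 m b + ?sG p2 y2 m b * ?dF p1 y1 a m) / d m"
        using assms(2)[of m] by (simp add: divide_right_mono)
      moreover have "(?sF p1 y1 a m * ?dG p2 y2 m b + ?sG p2 y2 m b * ?dF p1 y1 a m) / d m =
          ?sF p1 y1 a m * (?dG p2 y2 m b / d m) + ?dF p1 y1 a m * (?sG p2 y2 m b / d m)"
        using assms(2)[of m] by (simp add: field_simps)
      ultimately show "(\<bar>?h True p1 y1 p2 y2 a b m\<bar> + \<bar>?h False p1 y1 p2 y2 a b m\<bar>) / d m \<le>
          ?sF p1 y1 a m * (?dG p2 y2 m b / d m) + ?dF p1 y1 a m * (?sG p2 y2 m b / d m)"
        by simp
    qed
    finally show ?thesis .
  qed
  have "(\<Sum>p1\<in>A. \<Sum>p2\<in>A. \<Sum>g\<in>UNIV. \<Sum>y1\<in>Y. \<Sum>y2\<in>Y. \<Sum>a\<in>S. \<Sum>b\<in>S.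
      \<bar>\<Sum>m\<in>S. ?h g p1 y1 p2 y2 a b m / d m\<bar>) =
      (\<Sum>p1\<in>A. \<Sum>p2\<in>A. \<Sum>y1\<in>Y. \<Sum>y2\<in>Y. \<Sum>a\<in>S. \<Sum>b\<in>S. \<Sum>g\<in>UNIV.
      \<bar>\<Sum>m\<in>S. ?h g p1 y1 p2 y2 a b m / d m\<bar>)"
    by (simp only: sum.swap[where A = "UNIV :: bool set" and B = Y] sum.swap[where A = "UNIV :: bool set" and B = S])
  also have "\<dots> \<le> (\<Sum>p1\<in>A. \<Sum>p2\<in>A. \<Sum>y1\<in>Y. \<Sum>y2\<in>Y. \<Sum>a\<in>S. \<Sum>b\<in>S.
      \<Sum>m\<in>S. ?sF p1 y1 a m * (?dG p2 y2 m b / d m) + ?dF p1 y1 a m * (?sG p2 y2 m b / d m))"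
    by (intro sum_mono pair)
  also have "\<dots> = (\<Sum>m\<in>S. (\<Sum>p\<in>A. \<Sum>y\<in>Y. \<Sum>a\<in>S. ?sF p y a m) *
        (\<Sum>p\<in>A. \<Sum>y\<in>Y. \<Sum>b\<in>S. ?dG p y m b / d m)) +
      (\<Sum>m\<in>S. (\<Sum>p\<in>A. \<Sum>y\<in>Y. \<Sum>a\<in>S. ?dF p y a m) *
        (\<Sum>p\<in>A. \<Sum>y\<in>Y. \<Sum>b\<in>S. ?sG p y m b / d m))"
    by (simp only: sum.distrib sum_chain_product)
  also have "\<dots> = (\<Sum>m\<in>S. d m * ((\<Sum>p\<in>A. \<Sum>y\<in>Y. \<Sum>b\<in>S. ?dG p y m b) / d m)) +
      (\<Sum>m\<in>S. (\<Sum>p\<in>A. \<Sum>y\<in>Y. \<Sum>a\<in>S. ?dF p y a m) * (d m / d m))"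
    by (simp only: F_mass G_mass flip: sum_divide_distrib)
  also have "\<dots> = (\<Sum>m\<in>S. \<Sum>p\<in>A. \<Sum>y\<in>Y. \<Sum>a\<in>S. ?dF p y a m) +
      (\<Sum>m\<in>S. \<Sum>p\<in>A. \<Sum>y\<in>Y. \<Sum>b\<in>S. ?dG p y m b)"
    using assms(2) by (simp add: less_imp_neq[symmetric])
  also have "\<dots> = (\<Sum>p\<in>A. \<Sum>y\<in>Y. \<Sum>a\<in>S. \<Sum>m\<in>S. ?dF p y a m) +
      (\<Sum>p\<in>A. \<Sum>y\<in>Y. \<Sum>m\<in>S. \<Sum>b\<in>S. ?dG p y m b)"
    by (rule arg_cong2[where f = "(+)"], rule sum_push_innermost, rule sum_push_third)
  finally show ?thesis .
qed

section \<open>Recursion for the total variation\<close>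

lemma sum_lists_of_len_double_pow:
  fixes f :: "'a::finite list \<Rightarrow> 'b::comm_monoid_add"
  shows "(\<Sum>ys\<in>lists_of_len (2 ^ Suc n). f ys) =
    (\<Sum>ys1\<in>lists_of_len (2 ^ n). \<Sum>ys2\<in>lists_of_len (2 ^ n). f (ys1 @ ys2))"
  using sum_lists_of_len_add[of f "2 ^ n" "2 ^ n"] by (simp add: mult_2)

lemma Khat_Suc_odd_eq:
  fixes W :: "'s::finite \<Rightarrow> bool \<times> 'y::finite \<times> 's \<Rightarrow> real"
  assumes "is_faim W \<pi>" "k < 2 ^ n"
  shows "Khat W \<pi> (Suc n) (Suc (2 * k)) =
    (\<Sum>p\<in>lists_of_len k. \<Sum>q\<in>lists_of_len k. \<Sum>ys1\<in>lists_of_len (2 ^ n). \<Sum>ys2\<in>lists_of_len (2 ^ n).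
      \<Sum>a\<in>UNIV. \<Sum>b\<in>UNIV.
      \<bar>\<Sum>m\<in>UNIV. joint_gap W \<pi> n (Suc k) p ys1 a m * joint_gap W \<pi> n (Suc k) q ys2 m b / \<pi> m\<bar>)"
  unfolding Khat_eq_sum_joint_gap diff_Suc_1 sum_lists_of_len_butterfly sum_lists_of_len_double_pow
  using assms by (intro sum.cong refl) (simp add: joint_gap_Suc_odd)

lemma Khat_Suc_even_eq:
  fixes W :: "'s::finite \<Rightarrow> bool \<times> 'y::finite \<times> 's \<Rightarrow> real"
  assumes "is_faim W \<pi>" "k < 2 ^ n"
  shows "Khat W \<pi> (Suc n) (Suc (Suc (2 * k))) =
    (\<Sum>p\<in>lists_of_len k. \<Sum>q\<in>lists_of_len k. \<Sum>g\<in>UNIV.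
      \<Sum>ys1\<in>lists_of_len (2 ^ n). \<Sum>ys2\<in>lists_of_len (2 ^ n). \<Sum>a\<in>UNIV. \<Sum>b\<in>UNIV.
      \<bar>\<Sum>m\<in>UNIV. (joint_UQ W \<pi> n (Suc k) g p ys1 a m * joint_UQ W \<pi> n (Suc k) False q ys2 m b -
        joint_UQ W \<pi> n (Suc k) (\<not> g) p ys1 a m * joint_UQ W \<pi> n (Suc k) True q ys2 m b) / \<pi> m\<bar>)"
  unfolding Khat_eq_sum_joint_gap diff_Suc_1 sum_lists_of_len_snoc sum_lists_of_len_butterfly
    sum_lists_of_len_double_pow
  using assms by (intro sum.cong refl) (simp add: joint_gap_Suc_even)

lemma one_div_le_psi0: "1 / \<pi> a \<le> psi0 \<pi>"
  unfolding psi0_def by (rule Max_ge) auto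

lemma joint_UQ_nonneg:
  "is_faim W \<pi> \<Longrightarrow> joint_UQ W \<pi> n i u pre ys a b \<ge> 0"
  unfolding joint_UQ_def faim_prob_def is_faim_def
  by (intro sum_nonneg) (auto intro!: mult_nonneg_nonneg prod_nonneg)

lemma Khat_Suc_odd_le:
  fixes W :: "'s::finite \<Rightarrow> bool \<times> 'y::finite \<times> 's \<Rightarrow> real"
  assumes "is_faim W \<pi>" "k < 2 ^ n"
  shows "Khat W \<pi> (Suc n) (Suc (2 * k)) \<le> psi0 \<pi> * (Khat W \<pi> n (Suc k))\<^sup>2"
proof -
  have K: "Khat W \<pi> n (Suc k) = (\<Sum>p\<in>lists_of_len k. \<Sum>ys\<in>lists_of_len (2 ^ n). \<Sum>a\<in>UNIV. \<Sum>b\<in>UNIV.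
      \<bar>joint_gap W \<pi> n (Suc k) p ys a b\<bar>)"
    by (simp add: Khat_eq_sum_joint_gap)
  show ?thesis
    unfolding Khat_Suc_odd_eq[OF assms] power2_eq_square K
    by (rule sum_abs_chain_le) (simp_all add: faim_stationary_pos[OF assms(1)] one_div_le_psi0)
qed

lemma Khat_Suc_even_le:
  fixes W :: "'s::finite \<Rightarrow> bool \<times> 'y::finite \<times> 's \<Rightarrow> real"
  assumes "is_faim W \<pi>" "k < 2 ^ n"
  shows "Khat W \<pi> (Suc n) (Suc (Suc (2 * k))) \<le> 2 * Khat W \<pi> n (Suc k)"
proof -
  have K: "Khat W \<pi> n (Suc k) = (\<Sum>p\<in>lists_of_len k. \<Sum>ys\<in>lists_of_len (2 ^ n). \<Sum>a\<in>UNIV. \<Sum>b\<in>UNIV.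
      \<bar>joint_UQ W \<pi> n (Suc k) False p ys a b - joint_UQ W \<pi> n (Suc k) True p ys a b\<bar>)"
    by (simp add: Khat_eq_sum_joint_gap joint_gap_def)
  show ?thesis
    unfolding Khat_Suc_even_eq[OF assms] unfolding mult_2 K
    by (rule sum_abs_cross_chain_le)
      (simp_all add: assms faim_stationary_pos[OF assms(1)] joint_UQ_nonneg
        sum_joint_UQ_into_state sum_joint_UQ_from_state)
qed

lemma polar_index_Suc:
  "polar_index B (Suc n) = Suc (2 * (polar_index B n - 1) + (if B (Suc n) then 1 else 0))"
proof -
  have "(\<Sum>j\<in>{1..n}. (if B j then 1 else 0) * 2 ^ (Suc n - j)) =
      (\<Sum>j\<in>{1..n}. 2 * ((if B j then 1 else 0) * (2::nat) ^ (n - j)))"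
    by (rule sum.cong[OF refl]) (simp add: Suc_diff_le)
  then show ?thesis
    by (simp add: polar_index_def sum.cl_ivl_Suc sum_distrib_left)
qed

lemma polar_index_bounds: "1 \<le> polar_index B n" "polar_index B n - 1 < 2 ^ n"
proof -
  show "1 \<le> polar_index B n" by (simp add: polar_index_def)
  show "polar_index B n - 1 < 2 ^ n"
  proof (induction n)
    case (Suc n)
    then show ?case by (simp add: polar_index_Suc)
  qed (simp add: polar_index_def)
qed

theorem proposition2:
  fixes W :: "'s::finite \<Rightarrow> bool \<times> 'y::finite \<times> 's \<Rightarrow> real"
    and \<pi> :: "'s \<Rightarrow> real"
    and B :: "nat \<Rightarrow> bool"
    and n :: nat
  assumes "is_faim W \<pi>"
    and "n \<ge> 1"
  shows "Khat W \<pi> (n + 1) (polar_index B (n + 1)) \<le>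
           (if B (n + 1) then 2 * Khat W \<pi> n (polar_index B n)
            else psi0 \<pi> * (Khat W \<pi> n (polar_index B n))\<^sup>2)"
proof -
  define k where "k = polar_index B n - 1"
  have "k < 2 ^ n" and idx: "polar_index B n = Suc k"
    using polar_index_bounds[of B n] by (simp_all add: k_def)
  show ?thesis
    using Khat_Suc_even_le[OF assms(1) \<open>k < 2 ^ n\<close>] Khat_Suc_odd_le[OF assms(1) \<open>k < 2 ^ n\<close>]
    by (simp add: idx polar_index_Suc flip: k_def)
qed

end
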